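(* Let $X$ be a set with a prebornology $\mathcal{B}$, and let $\mathcal{C}_1,\mathcal{C}_2$ be coarse structures on $X$ whose induced prebornologies both equal $\mathcal{B}$. Then the coarse structures $\exp\mathcal{C}_1$ and $\exp\mathcal{C}_2$, restricted to $\flat(X)=\mathcal{B}\setminus\{\varnothing\}$, induce the same prebornology on $\flat(X)$.
   Context: A coarse structure on $X$ is a family of subsets of $X\times X$ containing the diagonal, closed under subsets, finite unions, inverses and compositions; its induced prebornology is $\{B\subseteq X: B\times B\in\mathcal{C}\}$. For $E\subseteq X\times X$, $\exp E=\{(A,B)\in\mathcal{P}(X)^2: A\subseteq E[B]\text{ and }B\subseteq E[A]\}$, and $\exp\mathcal{C}$ is the coarse structure on $\mathcal{P}(X)$ generated by $\{\exp E: E\in\mathcal{C}\}$; its restriction to $\flat(X)$ is $\{E'\cap(\flat(X)\times\flat(X)):E'\in\exp\mathcal{C}\}$, and the induced prebornology on $\flat(X)$ consists of $\mathcal{S}\subseteq\flat(X)$ with $\mathcal{S}\times\mathcal{S}$ in that restricted structure. *)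

theory Defs
  imports Main
begin

definition coarse_structure :: "'a set \<Rightarrow> ('a \<times> 'a) set set \<Rightarrow> bool" where
  "coarse_structure X C \<longleftrightarrow>
     (\<forall>E\<in>C. E \<subseteq> X \<times> X) \<and> Id_on X \<in> C \<and>
     (\<forall>E\<in>C. \<forall>F. F \<subseteq> E \<longrightarrow> F \<in> C) \<and>
     (\<forall>E\<in>C. \<forall>F\<in>C. E \<union> F \<in> C) \<and>
     (\<forall>E\<in>C. E\<inverse> \<in> C) \<and>
     (\<forall>E\<in>C. \<forall>F\<in>C. E O F \<in> C)"

definition prebornology :: "'a set \<Rightarrow> 'a set set \<Rightarrow> bool" where
  "prebornology X B \<longleftrightarrow>
     (\<forall>A\<in>B. A \<subseteq> X) \<and> (\<forall>A\<in>B. \<forall>A'. A' \<subseteq> A \<longrightarrow> A' \<in> B) \<and> (\<forall>x\<in>X. {x} \<in> B)"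

definition induced_prebornology :: "'a set \<Rightarrow> ('a \<times> 'a) set set \<Rightarrow> 'a set set" where
  "induced_prebornology X C = {B. B \<subseteq> X \<and> B \<times> B \<in> C}"

definition generated_coarse :: "'a set \<Rightarrow> ('a \<times> 'a) set set \<Rightarrow> ('a \<times> 'a) set set" where
  "generated_coarse Y G = \<Inter>{C. coarse_structure Y C \<and> G \<subseteq> C}"

definition exp_ent :: "'a set \<Rightarrow> ('a \<times> 'a) set \<Rightarrow> ('a set \<times> 'a set) set" where
  "exp_ent X E = {(A, B). A \<subseteq> X \<and> B \<subseteq> X \<and> A \<subseteq> E `` B \<and> B \<subseteq> E `` A}"

definition exp_coarse :: "'a set \<Rightarrow> ('a \<times> 'a) set set \<Rightarrow> ('a set \<times> 'a set) set set" where
  "exp_coarse X C = generated_coarse (Pow X) (exp_ent X ` C)"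

definition flat :: "'a set set \<Rightarrow> 'a set set" where
  "flat B = B - {{}}"

definition restrict_coarse :: "'b set \<Rightarrow> ('b \<times> 'b) set set \<Rightarrow> ('b \<times> 'b) set set" where
  "restrict_coarse Y C = {E \<inter> (Y \<times> Y) | E. E \<in> C}"

end

theory Submission
  imports Defs
begin

text \<open>Since \<open>exp E\<close> is symmetric, monotone in \<open>E\<close>, and \<open>exp E \<circ> exp F \<subseteq> exp (E \<circ> F \<union> F \<circ> E)\<close>,
the coarse structure \<open>exp \<C>\<close> is just the downward closure of the sets \<open>exp E\<close>, \<open>E \<in> \<C>\<close>.
A family \<open>\<S>\<close> of nonempty bounded sets is then bounded in \<open>exp \<C>\<close> exactly when \<open>\<Union>\<S>\<close> is
bounded: if \<open>\<S> \<times> \<S> \<subseteq> exp E\<close> and \<open>A \<in> \<S>\<close>, then \<open>\<Union>\<S> \<subseteq> E[A]\<close>, which is bounded;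
conversely, a bounded \<open>U\<close> gives \<open>\<S> \<times> \<S> \<subseteq> exp (U \<times> U)\<close> for every family of nonempty
subsets of \<open>U\<close>. So the induced prebornology on \<open>\<flat>(X)\<close> depends on the coarse structure only
through its bounded sets.\<close>

lemma
  assumes "coarse_structure X C"
  shows coarse_structure_Id_on: "Id_on X \<in> C"
    and coarse_structure_downward_closed: "E \<in> C \<Longrightarrow> F \<subseteq> E \<Longrightarrow> F \<in> C"
    and coarse_structure_Un: "E \<in> C \<Longrightarrow> F \<in> C \<Longrightarrow> E \<union> F \<in> C"
    and coarse_structure_converse: "E \<in> C \<Longrightarrow> E\<inverse> \<in> C"
    and coarse_structure_relcomp: "E \<in> C \<Longrightarrow> F \<in> C \<Longrightarrow> E O F \<in> C"
  using assms unfolding coarse_structure_def by simp_all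

lemma coarse_structure_square_Image:
  assumes cs: "coarse_structure X C" and "E \<in> C" "A \<times> A \<in> C"
  shows "E `` A \<times> E `` A \<in> C"
proof (rule coarse_structure_downward_closed[OF cs])
  show "E\<inverse> O (A \<times> A) O E \<in> C"
    using assms by (intro coarse_structure_relcomp coarse_structure_converse)
  show "E `` A \<times> E `` A \<subseteq> E\<inverse> O (A \<times> A) O E" by blast
qed

lemma generated_coarse_eqI:
  assumes "coarse_structure Y D" "G \<subseteq> D" "\<And>F. F \<in> D \<Longrightarrow> \<exists>E\<in>G. F \<subseteq> E"
  shows "generated_coarse Y G = D"
proof
  show "generated_coarse Y G \<subseteq> D"
    unfolding generated_coarse_def using assms(1,2) by blast
  show "D \<subseteq> generated_coarse Y G"
    unfolding generated_coarse_def
    using assms(3) coarse_structure_downward_closed by blast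
qed

lemma square_in_restrict_coarse_iff:
  assumes "\<And>E F. E \<in> C \<Longrightarrow> F \<subseteq> E \<Longrightarrow> F \<in> C" "S \<subseteq> Y"
  shows "S \<times> S \<in> restrict_coarse Y C \<longleftrightarrow> S \<times> S \<in> C"
proof
  assume "S \<times> S \<in> restrict_coarse Y C"
  then obtain E where "E \<in> C" "S \<times> S = E \<inter> (Y \<times> Y)"
    unfolding restrict_coarse_def by blast
  then show "S \<times> S \<in> C" using assms(1) by blast
next
  assume "S \<times> S \<in> C"
  moreover have "S \<times> S = (S \<times> S) \<inter> (Y \<times> Y)" using assms(2) by blast
  ultimately show "S \<times> S \<in> restrict_coarse Y C"
    unfolding restrict_coarse_def by blast
qed

lemma exp_ent_mono: "E \<subseteq> F \<Longrightarrow> exp_ent X E \<subseteq> exp_ent X F"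
  unfolding exp_ent_def using Image_mono[of E F] by blast

lemma converse_exp_ent: "(exp_ent X E)\<inverse> = exp_ent X E"
  unfolding exp_ent_def by auto

lemma relcomp_exp_ent: "exp_ent X E O exp_ent X F \<subseteq> exp_ent X (E O F \<union> F O E)"
proof (rule subsetI, erule relcompE)
  fix p A M D
  assume p: "p = (A, D)" and "(A, M) \<in> exp_ent X E" "(M, D) \<in> exp_ent X F"
  then have "A \<subseteq> X" "D \<subseteq> X" "A \<subseteq> E `` M" "M \<subseteq> E `` A" "M \<subseteq> F `` D" "D \<subseteq> F `` M"
    by (simp_all add: exp_ent_def)
  then have "A \<subseteq> (F O E) `` D" "D \<subseteq> (E O F) `` A"
    unfolding relcomp_Image by (meson Image_mono order_trans order_refl)+
  then show "p \<in> exp_ent X (E O F \<union> F O E)"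
    using p \<open>A \<subseteq> X\<close> \<open>D \<subseteq> X\<close> unfolding exp_ent_def by blast
qed

lemma coarse_structure_exp_ent_downclosure:
  assumes cs: "coarse_structure X C"
  shows "coarse_structure (Pow X) {F. \<exists>E\<in>C. F \<subseteq> exp_ent X E}"
  unfolding coarse_structure_def
proof (intro conjI ballI allI impI)
  let ?D = "{F. \<exists>E\<in>C. F \<subseteq> exp_ent X E}"
  show "F \<subseteq> Pow X \<times> Pow X" if "F \<in> ?D" for F
    using that unfolding exp_ent_def by auto
  have "Id_on (Pow X) \<subseteq> exp_ent X (Id_on X)"
    unfolding exp_ent_def by auto
  then show "Id_on (Pow X) \<in> ?D"
    using coarse_structure_Id_on[OF cs] by blast
  show "F \<in> ?D" if "E \<in> ?D" "F \<subseteq> E" for E F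
    using that by blast
  show "E \<union> F \<in> ?D" if "E \<in> ?D" "F \<in> ?D" for E F
  proof -
    from that obtain E' F' where "E' \<in> C" "F' \<in> C" "E \<subseteq> exp_ent X E'" "F \<subseteq> exp_ent X F'"
      by blast
    moreover have "exp_ent X E' \<union> exp_ent X F' \<subseteq> exp_ent X (E' \<union> F')"
      by (simp add: exp_ent_mono)
    ultimately show ?thesis
      using coarse_structure_Un[OF cs] by blast
  qed
  show "E\<inverse> \<in> ?D" if "E \<in> ?D" for E
    using that converse_exp_ent by blast
  show "E O F \<in> ?D" if "E \<in> ?D" "F \<in> ?D" for E F
  proof -
    from that obtain E' F' where "E' \<in> C" "F' \<in> C" "E \<subseteq> exp_ent X E'" "F \<subseteq> exp_ent X F'"
      by blast
    moreover have "E' O F' \<union> F' O E' \<in> C"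
      using \<open>E' \<in> C\<close> \<open>F' \<in> C\<close> by (intro coarse_structure_Un[OF cs] coarse_structure_relcomp[OF cs])
    ultimately show ?thesis
      using relcomp_exp_ent[of X E' F'] by blast
  qed
qed

lemma exp_coarse_eq:
  "coarse_structure X C \<Longrightarrow> exp_coarse X C = {F. \<exists>E\<in>C. F \<subseteq> exp_ent X E}"
  unfolding exp_coarse_def
  by (rule generated_coarse_eqI[OF coarse_structure_exp_ent_downclosure]) auto

lemma Union_square_in_coarse_structure:
  assumes cs: "coarse_structure X C" and E: "E \<in> C" "S \<times> S \<subseteq> exp_ent X E"
    and A: "A \<in> S" "A \<times> A \<in> C"
  shows "\<Union>S \<times> \<Union>S \<in> C"
proof -
  have "\<Union>S \<subseteq> E `` A"
  proof
    fix x assume "x \<in> \<Union>S"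
    then obtain A' where "A' \<in> S" "x \<in> A'" by blast
    moreover have "(A', A) \<in> exp_ent X E" using E(2) \<open>A' \<in> S\<close> A(1) by blast
    ultimately show "x \<in> E `` A" by (auto simp: exp_ent_def)
  qed
  then have "\<Union>S \<times> \<Union>S \<subseteq> E `` A \<times> E `` A" by blast
  then show ?thesis
    using coarse_structure_square_Image[OF cs E(1) A(2)] coarse_structure_downward_closed[OF cs]
    by blast
qed

lemma square_subset_exp_ent_Union:
  assumes "{} \<notin> S" "\<Union>S \<subseteq> X"
  shows "S \<times> S \<subseteq> exp_ent X (\<Union>S \<times> \<Union>S)"
proof clarify
  fix A A' assume "A \<in> S" "A' \<in> S"
  moreover have "A \<noteq> {}" "A' \<noteq> {}" using assms(1) calculation by auto
  ultimately show "(A, A') \<in> exp_ent X (\<Union>S \<times> \<Union>S)"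
    using assms(2) by (auto simp: exp_ent_def)
qed

lemma square_subset_exp_ent_iff_Union_bounded:
  assumes cs: "coarse_structure X C" and B: "induced_prebornology X C = B"
    and S: "S \<subseteq> flat B"
  shows "(\<exists>E\<in>C. S \<times> S \<subseteq> exp_ent X E) \<longleftrightarrow> S = {} \<or> \<Union>S \<in> B"
proof -
  have bounded_iff: "K \<in> B \<longleftrightarrow> K \<subseteq> X \<and> K \<times> K \<in> C" for K
    unfolding B[symmetric] induced_prebornology_def by simp
  have S_bounded: "A \<subseteq> X" "A \<times> A \<in> C" if "A \<in> S" for A
  proof -
    have "A \<in> B" using S that by (auto simp: flat_def)
    then show "A \<subseteq> X" "A \<times> A \<in> C" by (simp_all add: bounded_iff)
  qed
  have "{} \<notin> S" using S by (auto simp: flat_def)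
  show ?thesis
  proof
    assume "\<exists>E\<in>C. S \<times> S \<subseteq> exp_ent X E"
    then obtain E where E: "E \<in> C" "S \<times> S \<subseteq> exp_ent X E" by blast
    show "S = {} \<or> \<Union>S \<in> B"
    proof (cases "S = {}")
      case False
      then obtain A where "A \<in> S" by blast
      then have "\<Union>S \<times> \<Union>S \<in> C"
        using Union_square_in_coarse_structure[OF cs E _ S_bounded(2)] by blast
      moreover have "\<Union>S \<subseteq> X" using S_bounded(1) by blast
      ultimately show ?thesis by (simp add: bounded_iff)
    qed simp
  next
    assume "S = {} \<or> \<Union>S \<in> B"
    then consider "S = {}" | "\<Union>S \<subseteq> X" "\<Union>S \<times> \<Union>S \<in> C"
      by (auto simp: bounded_iff)
    then show "\<exists>E\<in>C. S \<times> S \<subseteq> exp_ent X E"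
    proof cases
      case 1
      then show ?thesis using coarse_structure_Id_on[OF cs] by blast
    next
      case 2
      then show ?thesis using square_subset_exp_ent_Union[OF \<open>{} \<notin> S\<close>] by blast
    qed
  qed
qed

lemma induced_prebornology_flat_exp_coarse:
  assumes cs: "coarse_structure X C" and B: "induced_prebornology X C = B"
  shows "induced_prebornology (flat B) (restrict_coarse (flat B) (exp_coarse X C))
       = {S. S \<subseteq> flat B \<and> (S = {} \<or> \<Union>S \<in> B)}"
proof -
  have "S \<times> S \<in> restrict_coarse (flat B) (exp_coarse X C) \<longleftrightarrow> S = {} \<or> \<Union>S \<in> B"
    if "S \<subseteq> flat B" for S
  proof -
    have "S \<times> S \<in> restrict_coarse (flat B) (exp_coarse X C) \<longleftrightarrow> S \<times> S \<in> exp_coarse X C"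
      using square_in_restrict_coarse_iff[OF
          coarse_structure_downward_closed[OF coarse_structure_exp_ent_downclosure[OF cs]] that]
      by (simp add: exp_coarse_eq[OF cs])
    also have "\<dots> \<longleftrightarrow> (\<exists>E\<in>C. S \<times> S \<subseteq> exp_ent X E)"
      by (simp add: exp_coarse_eq[OF cs])
    also have "\<dots> \<longleftrightarrow> S = {} \<or> \<Union>S \<in> B"
      by (rule square_subset_exp_ent_iff_Union_bounded[OF cs B that])
    finally show ?thesis .
  qed
  then show ?thesis unfolding induced_prebornology_def by blast
qed

theorem mainTheorem19:
  fixes X :: "'a set" and B :: "'a set set"
    and C1 C2 :: "('a \<times> 'a) set set"
  assumes "prebornology X B"
    and "coarse_structure X C1" and "coarse_structure X C2"
    and "induced_prebornology X C1 = B" and "induced_prebornology X C2 = B"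
  shows "induced_prebornology (flat B) (restrict_coarse (flat B) (exp_coarse X C1))
       = induced_prebornology (flat B) (restrict_coarse (flat B) (exp_coarse X C2))"
  using induced_prebornology_flat_exp_coarse[OF assms(2,4)]
    induced_prebornology_flat_exp_coarse[OF assms(3,5)] by simp

end
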